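(* Let $q$ be a prime power and $n$ a positive integer. Let $h\in\mathbb{F}_q[x]$, $f\in\mathbb{F}_{q^n}[x]$ and $P(x)=f(\mathrm{Tr}_{q^n/q}(x))+L_h(x)$. Then $P$ is a complete permutation polynomial of $\mathbb{F}_{q^n}$ if and only if: (i) $\gcd\left(h(x)\cdot(h(x)+1), \frac{x^n-1}{x-1}\right)=1$; and (ii) $Q(x):=T_n[f](x)+h(1)\cdot x\in\mathbb{F}_q[x]$ is a complete permutation polynomial of $\mathbb{F}_q$.
   Context: For $u(x)=\sum_{i=0}^m a_i x^i\in\mathbb{F}_q[x]$, its linearized $q$-associate is $L_u(x)=\sum_{i=0}^m a_i x^{q^i}$. $\mathrm{Tr}_{q^n/q}(x)=x+x^q+\cdots+x^{q^{n-1}}$. For $f(x)=\sum_{i=0}^d a_i x^i\in\mathbb{F}_{q^n}[x]$, $T_n[f](x)=\sum_{i=0}^d\mathrm{Tr}_{q^n/q}(a_i)x^i\in\mathbb{F}_q[x]$. A polynomial $b$ over a finite field $K$ is a complete permutation polynomial of $K$ if both $b(x)$ and $b(x)+x$ induce bijections of $K$. *)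

theory Defs
  imports "HOL-Computational_Algebra.Computational_Algebra"
begin

definition subfield_q :: "nat \<Rightarrow> 'a::field set" where
  "subfield_q q = {x. x ^ q = x}"

definition trace_q :: "nat \<Rightarrow> nat \<Rightarrow> 'a::field \<Rightarrow> 'a" where
  "trace_q q n x = (\<Sum>i<n. x ^ (q ^ i))"

definition lin_assoc :: "nat \<Rightarrow> 'a::field poly \<Rightarrow> 'a \<Rightarrow> 'a" where
  "lin_assoc q u x = (\<Sum>i\<le>degree u. coeff u i * x ^ (q ^ i))"

definition Tn :: "nat \<Rightarrow> nat \<Rightarrow> 'a::field poly \<Rightarrow> 'a poly" where
  "Tn q n f = (\<Sum>i\<le>degree f. monom (trace_q q n (coeff f i)) i)"

definition complete_perm_on :: "'a set \<Rightarrow> ('a \<Rightarrow> 'a::ring) \<Rightarrow> bool" where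
  "complete_perm_on S b \<longleftrightarrow> bij_betw b S S \<and> bij_betw (\<lambda>x. b x + x) S S"

end

(* Write L_u for the linearized associate of u in F_q[x].  Since x |-> x^q is additive and
   fixes F_q, u |-> L_u turns products into compositions, L_(x^n - 1) = 0, and
   Tr = L_Phi for Phi = (x^n - 1)/(x - 1).  From Tr (P x) = Q (Tr x) and Tr(F_(q^n)) = F_q,
   P is a permutation iff Tr and L_h have no common nonzero root and Q permutes F_q
   (Akbary-Ghioca-Wang).  By Bezout in F_q[x], the kernel condition says gcd(h, Phi) = 1:
   conversely, a common factor d of positive degree splits x^n - 1 = d w with deg w < n,
   so L_w is not identically zero (its degree q^(deg w) is below q^n) and its image lies in
   the kernels of L_d, L_h and Tr.  Since P x + x = f (Tr x) + L_(h+1) x, applying this to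
   h and to h + 1 yields (i) and (ii). *)

theory Submission
  imports Defs "HOL-Number_Theory.Residues"
begin

hide_const (open) UnivPoly.coeff UnivPoly.monom Module.module.smult

(* The library version finite_field_power_card_eq_same needs the sort finite_field. *)
lemma power_card_eq_self:
  fixes x :: "'a::{finite,field}"
  shows "x ^ card (UNIV :: 'a set) = x"
proof (cases "x = 0")
  case False
  define G :: "'a monoid" where "G = \<lparr>carrier = UNIV - {0}, monoid.mult = (*), one = 1\<rparr>"
  interpret group G
  proof (rule groupI)
    fix y assume "y \<in> carrier G"
    then show "\<exists>z\<in>carrier G. z \<otimes>\<^bsub>G\<^esub> y = \<one>\<^bsub>G\<^esub>"
      by (intro bexI[of _ "inverse y"]) (auto simp: G_def)
  qed (auto simp: G_def mult.assoc)
  have pow_G: "y [^]\<^bsub>G\<^esub> m = y ^ m" for y and m :: nat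
    by (induction m) (simp_all add: G_def mult.commute)
  have "x \<in> carrier G"
    using False by (simp add: G_def)
  then have "x ^ order G = 1"
    using pow_order_eq_1 unfolding pow_G by (simp add: G_def)
  moreover have "card (UNIV :: 'a set) = Suc (order G)"
    using finite_UNIV_card_ge_0[where ?'a = 'a] by (simp add: order_def G_def card_Diff_singleton)
  ultimately show ?thesis
    by simp
qed (use finite_UNIV_card_ge_0[where ?'a = 'a] in simp)

section \<open>Bezout's identity for polynomials over a field\<close>

(* The library has no gcd on polynomials over an arbitrary field, so Bezout's identity is
   obtained from a nonzero element of least degree in the ideal. *)

lemma monic_dvd_antisym:
  fixes a b :: "'a::field poly"
  assumes "lead_coeff a = 1" "lead_coeff b = 1" "a dvd b" "b dvd a"
  shows "a = b"
proof -
  obtain c where c: "b = a * c"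
    using assms(3) by (elim dvdE)
  have "a \<noteq> 0" "b \<noteq> 0" "c \<noteq> 0"
    using assms(1,2) c by auto
  then have "degree b = degree a"
    using assms(3,4) by (meson dvd_imp_degree_le le_antisym)
  then have "degree c = 0"
    using c \<open>a \<noteq> 0\<close> \<open>c \<noteq> 0\<close> by (simp add: degree_mult_eq)
  moreover have "lead_coeff c = 1"
    using c assms(1,2) by (simp add: lead_coeff_mult)
  ultimately have "c = 1"
    by (metis degree_0_id one_pCons)
  then show ?thesis
    using c by simp
qed

lemma poly_ideal_monic_generator:
  fixes p r :: "'a::field poly"
  assumes "r \<noteq> 0"
  obtains a b where "lead_coeff (a * p + b * r) = 1"
    and "a * p + b * r dvd p" and "a * p + b * r dvd r"
proof -
  define I where "I = {a * p + b * r | a b. True}"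
  have I_comb: "u * x + v * y \<in> I" if xy: "x \<in> I" "y \<in> I" for u v x y
  proof -
    obtain a b a' b' where "x = a * p + b * r" "y = a' * p + b' * r"
      using xy unfolding I_def by blast
    then have "u * x + v * y = (u * a + v * a') * p + (u * b + v * b') * r"
      by (simp add: algebra_simps)
    then show ?thesis
      by (auto simp: I_def)
  qed
  have "p = 1 * p + 0 * r" "r = 0 * p + 1 * r"
    by simp_all
  then have p_I: "p \<in> I" and r_I: "r \<in> I"
    unfolding I_def by blast+
  obtain m0 where m0: "m0 \<in> I - {0}" and min: "\<And>y. y \<in> I - {0} \<Longrightarrow> degree m0 \<le> degree y"
    using ex_has_least_nat[of "\<lambda>y. y \<in> I - {0}" r degree] r_I assms by blast
  define m where "m = smult (inverse (lead_coeff m0)) m0"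
  have m_I: "m \<in> I"
    using I_comb[of m0 m0 "[:inverse (lead_coeff m0):]" 0] m0 by (simp add: m_def)
  have monic: "lead_coeff m = 1" and deg_m: "degree m = degree m0"
    using m0 by (simp_all add: m_def)
  have m_dvd: "m dvd y" if "y \<in> I" for y
  proof (rule ccontr)
    assume "\<not> m dvd y"
    then have "y mod m \<noteq> 0"
      by (simp add: dvd_eq_mod_eq_0)
    moreover have "y mod m \<in> I"
      using I_comb[OF that m_I, of 1 "- (y div m)"] by (simp add: minus_div_mult_eq_mod)
    ultimately have "degree m0 \<le> degree (y mod m)"
      using min by blast
    moreover have "degree (y mod m) < degree m"
      using \<open>y mod m \<noteq> 0\<close> monic by (intro degree_mod_less') auto
    ultimately show False
      using deg_m by simp
  qed
  obtain a b where "m = a * p + b * r"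
    using m_I by (auto simp: I_def)
  then show thesis
    using that monic m_dvd[OF p_I] m_dvd[OF r_I] by blast
qed

lemma poly_coprime_imp_bezout:
  fixes p r :: "'a::field poly"
  assumes "coprime p r" "r \<noteq> 0"
  obtains a b where "a * p + b * r = 1"
proof -
  obtain a b where m: "lead_coeff (a * p + b * r) = 1"
    "a * p + b * r dvd p" "a * p + b * r dvd r"
    using poly_ideal_monic_generator[OF assms(2)] .
  then have "is_unit (a * p + b * r)"
    using assms(1) coprime_common_divisor by blast
  then have "a * p + b * r = 1"
    using m(1) by (intro monic_dvd_antisym) auto
  then show thesis
    by (rule that)
qed

lemma poly_bezout_imp_coprime:
  fixes a b p r :: "'a::field poly"
  assumes "a * p + b * r = 1"
  shows "coprime p r"
proof (rule coprimeI)
  fix c assume "c dvd p" "c dvd r"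
  then have "c dvd a * p + b * r"
    by simp
  then show "is_unit c"
    using assms by simp
qed

lemma poly_coprime_mult_left_iff:
  fixes a b r :: "'a::field poly"
  assumes "r \<noteq> 0"
  shows "coprime (a * b) r \<longleftrightarrow> coprime a r \<and> coprime b r"
proof
  assume "coprime (a * b) r"
  obtain u v where uv: "u * (a * b) + v * r = 1"
    using poly_coprime_imp_bezout[OF \<open>coprime (a * b) r\<close> assms] .
  have "(u * b) * a + v * r = 1" "(u * a) * b + v * r = 1"
    using uv by (simp_all add: ac_simps)
  then show "coprime a r \<and> coprime b r"
    by (blast intro: poly_bezout_imp_coprime)
next
  assume "coprime a r \<and> coprime b r"
  then have "coprime a r" "coprime b r"
    by simp_all
  obtain u v where uv: "u * a + v * r = 1"
    using poly_coprime_imp_bezout[OF \<open>coprime a r\<close> assms] .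
  obtain u' v' where uv': "u' * b + v' * r = 1"
    using poly_coprime_imp_bezout[OF \<open>coprime b r\<close> assms] .
  have "(u * u') * (a * b) + (u * a * v' + v * (u' * b + v' * r)) * r
        = (u * a + v * r) * (u' * b + v' * r)"
    by (simp add: algebra_simps)
  also have "\<dots> = 1"
    by (simp add: uv uv')
  finally show "coprime (a * b) r"
    by (rule poly_bezout_imp_coprime)
qed

section \<open>The Akbary--Ghioca--Wang criterion\<close>

context
  fixes T M F Q :: "'a::{finite,ab_group_add} \<Rightarrow> 'a" and S :: "'a set"
  assumes T_diff: "\<And>x y. T (x - y) = T x - T y"
    and M_diff: "\<And>x y. M (x - y) = M x - M y"
    and range_T: "range T = S"
    and T_comp: "\<And>x. T (F (T x) + M x) = Q (T x)"
begin

lemma AGW_kernel_trivial_if_bij: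
  assumes "bij (\<lambda>x. F (T x) + M x)"
  shows "\<forall>x. T x = 0 \<and> M x = 0 \<longrightarrow> x = 0"
proof (intro allI impI)
  fix x assume "T x = 0 \<and> M x = 0"
  moreover have "T 0 = 0" "M 0 = 0"
    using T_diff[of 0 0] M_diff[of 0 0] by simp_all
  ultimately have "F (T x) + M x = F (T 0) + M 0"
    by simp
  then show "x = 0"
    by (rule injD[OF bij_is_inj[OF assms]])
qed

lemma AGW_bij_betw_if_bij:
  assumes "bij (\<lambda>x. F (T x) + M x)"
  shows "bij_betw Q S S"
proof -
  have "Q ` S = S"
  proof
    show "Q ` S \<subseteq> S"
    proof (rule image_subsetI)
      fix c assume "c \<in> S"
      then obtain x where "c = T x"
        using range_T by blast
      then have "Q c = T (F (T x) + M x)"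
        by (simp add: T_comp)
      then show "Q c \<in> S"
        using range_T by blast
    qed
    show "S \<subseteq> Q ` S"
    proof
      fix c assume "c \<in> S"
      then obtain z where "c = T z"
        using range_T by blast
      moreover obtain y where "z = F (T y) + M y"
        using surjD[OF bij_is_surj[OF assms], of z] by blast
      ultimately have "c = Q (T y)"
        using T_comp by simp
      then show "c \<in> Q ` S"
        using range_T by blast
    qed
  qed
  moreover have "finite S"
    using range_T finite_imageI[of UNIV T] by simp
  ultimately show ?thesis
    by (simp add: bij_betw_def eq_card_imp_inj_on)
qed

lemma AGW_bij_if:
  assumes kernel: "\<forall>x. T x = 0 \<and> M x = 0 \<longrightarrow> x = 0" and "bij_betw Q S S"
  shows "bij (\<lambda>x. F (T x) + M x)"
proof -
  have "inj (\<lambda>x. F (T x) + M x)"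
  proof (rule injI)
    fix x y assume eq: "F (T x) + M x = F (T y) + M y"
    have "Q (T x) = Q (T y)"
      using T_comp[of x] T_comp[of y] eq by simp
    moreover have "T x \<in> S" "T y \<in> S"
      using range_T by blast+
    ultimately have "T x = T y"
      using \<open>bij_betw Q S S\<close> by (simp add: bij_betw_def inj_on_def)
    moreover from this have "M x = M y"
      using eq by simp
    ultimately show "x = y"
      using kernel T_diff[of x y] M_diff[of x y] by (metis right_minus_eq)
  qed
  then show ?thesis
    by (simp add: bij_def finite_UNIV_inj_surj)
qed

lemma AGW_bij_iff:
  "bij (\<lambda>x. F (T x) + M x) \<longleftrightarrow> (\<forall>x. T x = 0 \<and> M x = 0 \<longrightarrow> x = 0) \<and> bij_betw Q S S"
  using AGW_kernel_trivial_if_bij AGW_bij_betw_if_bij AGW_bij_if by blast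

end

section \<open>Fields of order \<open>q\<^sup>n\<close>\<close>

lemma power_prime_power_add:
  fixes x y :: "'a::{finite,field}"
  assumes "prime p" "card (UNIV :: 'a set) = p ^ m"
  shows "(x + y) ^ (p ^ k) = x ^ (p ^ k) + y ^ (p ^ k)"
proof -
  have "CHAR('a) dvd p ^ m"
    using CHAR_dvd_CARD[where ?'a = 'a] assms(2) by simp
  then have "CHAR('a) = p"
    using assms(1) prime_CHAR_semidom[OF finite_imp_CHAR_pos[OF finite_UNIV]]
    by (metis prime_dvd_power primes_dvd_imp_eq)
  then show ?thesis
    using assms(1) by (intro freshmans_dream') simp_all
qed

(* Only additivity of x |-> x^q is assumed; in the theorem it comes from q being a power of
   the characteristic. *)
locale Fqn_field =
  fixes field_type :: "'a::{finite,field} itself" and q n :: nat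
  assumes q_gt_1: "q > 1"
    and n_pos: "n > 0"
    and card_UNIV: "card (UNIV :: 'a set) = q ^ n"
    and power_q_add: "\<And>x y :: 'a. (x + y) ^ q = x ^ q + y ^ q"
begin

abbreviation Fq :: "'a set" where "Fq \<equiv> subfield_q q"
abbreviation Tr :: "'a \<Rightarrow> 'a" where "Tr \<equiv> trace_q q n"
abbreviation L :: "'a poly \<Rightarrow> 'a \<Rightarrow> 'a" where "L \<equiv> lin_assoc q"

lemma power_q_power_add: "(x + y :: 'a) ^ (q ^ i) = x ^ (q ^ i) + y ^ (q ^ i)"
  by (induction i arbitrary: x y) (simp_all add: power_mult power_q_add)

lemma zero_power_q_power [simp]: "(0 :: 'a) ^ (q ^ i) = 0"
  using q_gt_1 by simp

lemma power_q_power_diff: "(x - y :: 'a) ^ (q ^ i) = x ^ (q ^ i) - y ^ (q ^ i)"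
  using power_q_power_add[of "x - y" y i] by (simp add: eq_diff_eq)

lemma power_q_power_sum: "(\<Sum>j\<in>A. f j :: 'a) ^ (q ^ i) = (\<Sum>j\<in>A. f j ^ (q ^ i))"
  by (induction A rule: infinite_finite_induct) (simp_all add: power_q_power_add)

lemma power_q_sum: "(\<Sum>j\<in>A. f j :: 'a) ^ q = (\<Sum>j\<in>A. f j ^ q)"
  using power_q_power_sum[of f A 1] by simp

lemma power_q_power_n: "(x :: 'a) ^ (q ^ n) = x"
  using power_card_eq_self[of x] card_UNIV by simp

lemma mem_Fq_iff: "c \<in> Fq \<longleftrightarrow> c ^ q = c"
  by (simp add: subfield_q_def)

lemma Fq_power_q_power: "c \<in> Fq \<Longrightarrow> c ^ (q ^ i) = c"
  by (induction i) (simp_all add: power_Suc2 power_mult mem_Fq_iff)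

lemma Fq_diff: "c \<in> Fq \<Longrightarrow> d \<in> Fq \<Longrightarrow> c - d \<in> Fq"
  using power_q_power_diff[of c d 1] by (simp add: mem_Fq_iff)

lemma Fq_add: "c \<in> Fq \<Longrightarrow> d \<in> Fq \<Longrightarrow> c + d \<in> Fq"
  using power_q_add[of c d] by (simp add: mem_Fq_iff)

lemma Fq_divide: "c \<in> Fq \<Longrightarrow> d \<in> Fq \<Longrightarrow> c / d \<in> Fq"
  by (simp add: mem_Fq_iff power_divide)

lemma Fq_power: "c \<in> Fq \<Longrightarrow> c ^ m \<in> Fq"
  unfolding mem_Fq_iff by (metis mult.commute power_mult)

lemma Fq_0 [simp]: "0 \<in> Fq" and Fq_1 [simp]: "1 \<in> Fq"
  using q_gt_1 by (simp_all add: mem_Fq_iff)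

lemma Tr_add: "Tr (x + y) = Tr x + Tr y"
  by (simp add: trace_q_def power_q_power_add sum.distrib)

lemma Tr_diff: "Tr (x - y) = Tr x - Tr y"
  by (simp add: trace_q_def power_q_power_diff sum_subtractf)

lemma Tr_sum: "Tr (\<Sum>j\<in>A. f j) = (\<Sum>j\<in>A. Tr (f j))"
  unfolding trace_q_def power_q_power_sum by (rule sum.swap)

lemma Tr_mult_Fq: "c \<in> Fq \<Longrightarrow> Tr (c * x) = c * Tr x"
  by (simp add: trace_q_def power_mult_distrib Fq_power_q_power sum_distrib_left)

lemma Tr_mult_Fq_right: "c \<in> Fq \<Longrightarrow> Tr (x * c) = Tr x * c"
  using Tr_mult_Fq[of c x] by (simp add: mult.commute)

lemma Tr_power_q: "Tr (x ^ q) = Tr x"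
proof -
  obtain m where m: "n = Suc m"
    using n_pos by (cases n) auto
  have "Tr (x ^ q) = (\<Sum>i<m. x ^ (q ^ Suc i)) + x ^ (q ^ n)"
    by (simp add: trace_q_def m flip: power_mult)
  also have "\<dots> = x ^ (q ^ 0) + (\<Sum>i<m. x ^ (q ^ Suc i))"
    by (simp add: power_q_power_n)
  also have "\<dots> = Tr x"
    unfolding trace_q_def m by (rule sum.lessThan_Suc_shift[symmetric])
  finally show ?thesis .
qed

lemma Tr_power_q_power: "Tr (x ^ (q ^ i)) = Tr x"
proof (induction i arbitrary: x)
  case (Suc i)
  have "x ^ (q ^ Suc i) = (x ^ q) ^ (q ^ i)"
    by (simp add: power_mult)
  then show ?case
    using Suc[of "x ^ q"] by (simp add: Tr_power_q)
qed simp

lemma Tr_in_Fq: "Tr x \<in> Fq"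
proof -
  have "Tr x ^ q = (\<Sum>i<n. (x ^ q ^ i) ^ q)"
    unfolding trace_q_def using power_q_power_sum[of "\<lambda>i. x ^ q ^ i" "{..<n}" 1] by simp
  also have "\<dots> = Tr (x ^ q)"
    unfolding trace_q_def by (simp add: mult.commute flip: power_mult)
  finally show ?thesis
    by (simp add: mem_Fq_iff Tr_power_q)
qed

section \<open>Polynomials over \<open>F\<^sub>q\<close>\<close>

definition Fq_coeffs :: "'a poly \<Rightarrow> bool" where
  "Fq_coeffs p \<longleftrightarrow> (\<forall>i. coeff p i \<in> Fq)"

lemma Fq_coeffs_add: "Fq_coeffs u \<Longrightarrow> Fq_coeffs v \<Longrightarrow> Fq_coeffs (u + v)"
  by (simp add: Fq_coeffs_def Fq_add)

lemma Fq_coeffs_diff: "Fq_coeffs u \<Longrightarrow> Fq_coeffs v \<Longrightarrow> Fq_coeffs (u - v)"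
  by (simp add: Fq_coeffs_def Fq_diff)

lemma Fq_coeffs_monom: "c \<in> Fq \<Longrightarrow> Fq_coeffs (monom c m)"
  by (simp add: Fq_coeffs_def)

lemma Fq_coeffs_1: "Fq_coeffs 1"
  by (simp add: Fq_coeffs_def)

definition frob_poly :: "'a poly \<Rightarrow> 'a poly" where
  "frob_poly p = map_poly (\<lambda>c. c ^ q) p"

lemma coeff_frob_poly: "coeff (frob_poly p) i = coeff p i ^ q"
  unfolding frob_poly_def using q_gt_1 by (simp add: coeff_map_poly)

lemma frob_poly_add: "frob_poly (u + v) = frob_poly u + frob_poly v"
  by (rule poly_eqI) (simp add: coeff_frob_poly power_q_add)

lemma frob_poly_mult: "frob_poly (u * v) = frob_poly u * frob_poly v"
  by (rule poly_eqI) (simp add: coeff_frob_poly coeff_mult power_q_sum power_mult_distrib)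

lemma lead_coeff_frob_poly: "lead_coeff (frob_poly p) = lead_coeff p ^ q"
  unfolding frob_poly_def using q_gt_1 by (simp add: degree_map_poly coeff_map_poly)

lemma frob_poly_dvd: "u dvd v \<Longrightarrow> frob_poly u dvd frob_poly v"
  by (elim dvdE) (simp add: frob_poly_mult)

lemma Fq_coeffs_iff_frob_poly_eq: "Fq_coeffs p \<longleftrightarrow> frob_poly p = p"
  by (simp add: Fq_coeffs_def poly_eq_iff coeff_frob_poly mem_Fq_iff)

lemma Fq_coeffs_cofactor:
  assumes "Fq_coeffs d" "Fq_coeffs (d * e)" "d \<noteq> 0"
  shows "Fq_coeffs e"
proof -
  have "d * frob_poly e = d * e"
    using assms(1,2) by (simp add: Fq_coeffs_iff_frob_poly_eq frob_poly_mult)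
  then show ?thesis
    using assms(3) by (simp add: Fq_coeffs_iff_frob_poly_eq)
qed

(* The monic generator of the ideal (p, r) is unique and Frobenius maps it to a monic
   generator, so it has coefficients in F_q when p and r do. *)
lemma Fq_common_factor_if_not_coprime:
  assumes "Fq_coeffs p" "Fq_coeffs r" "r \<noteq> 0" "\<not> coprime p r"
  obtains d where "Fq_coeffs d" "degree d > 0" "d dvd p" "d dvd r"
proof -
  obtain a b where monic: "lead_coeff (a * p + b * r) = 1"
    and dvd_p: "a * p + b * r dvd p" and dvd_r: "a * p + b * r dvd r"
    using poly_ideal_monic_generator[OF assms(3)] .
  define d where "d = a * p + b * r"
  have frob_p: "frob_poly p = p" and frob_r: "frob_poly r = r"
    using assms(1,2) by (simp_all add: Fq_coeffs_iff_frob_poly_eq)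
  have "frob_poly d = frob_poly a * p + frob_poly b * r"
    by (simp add: d_def frob_poly_add frob_poly_mult frob_p frob_r)
  then have "d dvd frob_poly d"
    using dvd_p dvd_r by (simp add: d_def)
  moreover have "frob_poly d dvd d"
    using frob_poly_dvd[OF dvd_p] frob_poly_dvd[OF dvd_r]
    by (simp add: d_def frob_p frob_r)
  ultimately have "frob_poly d = d"
    using monic by (intro monic_dvd_antisym) (simp_all add: d_def lead_coeff_frob_poly)
  moreover have "degree d > 0"
  proof (rule ccontr)
    assume "\<not> degree d > 0"
    then have "d = 1"
      using monic by (metis d_def degree_0_id one_pCons neq0_conv)
    then show False
      using assms(4) poly_bezout_imp_coprime[of a p b r] by (simp add: d_def)
  qed
  ultimately show thesis
    using that dvd_p dvd_r by (simp add: d_def Fq_coeffs_iff_frob_poly_eq)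
qed

section \<open>Linearized associates\<close>

lemma lin_assoc_eq_sum: "degree u < N \<Longrightarrow> L u x = (\<Sum>i<N. coeff u i * x ^ (q ^ i))"
  unfolding lin_assoc_def by (rule sum.mono_neutral_left) (auto simp: coeff_eq_0)

lemma lin_assoc_0 [simp]: "L 0 x = 0"
  by (simp add: lin_assoc_def)

lemma lin_assoc_at_0 [simp]: "L u 0 = 0"
  by (simp add: lin_assoc_def)

lemma lin_assoc_diff_right: "L u (x - y) = L u x - L u y"
  by (simp add: lin_assoc_def power_q_power_diff right_diff_distrib sum_subtractf)

lemma lin_assoc_pCons: "L (pCons a u) x = a * x + L u (x ^ q)"
proof -
  define N where "N = Suc (degree u)"
  have "L (pCons a u) x = (\<Sum>i<Suc N. coeff (pCons a u) i * x ^ (q ^ i))"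
    by (rule lin_assoc_eq_sum) (use degree_pCons_le[of a u] in \<open>simp add: N_def\<close>)
  also have "\<dots> = a * x + (\<Sum>i<N. coeff u i * (x ^ q) ^ (q ^ i))"
    by (simp add: sum.lessThan_Suc_shift power_mult del: sum.lessThan_Suc)
  also have "(\<Sum>i<N. coeff u i * (x ^ q) ^ (q ^ i)) = L u (x ^ q)"
    by (rule lin_assoc_eq_sum[symmetric]) (simp add: N_def)
  finally show ?thesis .
qed

lemma lin_assoc_add: "L (u + v) x = L u x + L v x"
proof -
  define N where "N = Suc (max (degree u) (degree v))"
  have "degree (u + v) < N" "degree u < N" "degree v < N"
    using degree_add_le_max[of u v] by (simp_all add: N_def)
  then show ?thesis
    by (simp add: lin_assoc_eq_sum[of _ N] distrib_right sum.distrib)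
qed

lemma lin_assoc_smult: "L (smult a u) x = a * L u x"
  by (simp add: lin_assoc_eq_sum[of _ "Suc (degree u)"] degree_smult_le le_imp_less_Suc
      sum_distrib_left mult.assoc del: sum.lessThan_Suc)

lemma lin_assoc_sum: "L (\<Sum>j\<in>A. u j) x = (\<Sum>j\<in>A. L (u j) x)"
  by (induction A rule: infinite_finite_induct) (simp_all add: lin_assoc_add)

lemma lin_assoc_1 [simp]: "L 1 x = x"
  using lin_assoc_pCons[of 1 0 x] by (simp add: one_pCons)

lemma lin_assoc_monom_1: "L (monom 1 m) x = x ^ (q ^ m)"
proof (induction m arbitrary: x)
  case 0
  have "monom (1 :: 'a) 0 = 1"
    by (simp add: monom_0 one_pCons)
  then show ?case
    by simp
next
  case (Suc m)
  then show ?case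
    by (simp add: monom_Suc lin_assoc_pCons power_mult)
qed

lemma lin_assoc_power_q:
  assumes "Fq_coeffs v"
  shows "L v x ^ q = L v (x ^ q)"
  using assms unfolding lin_assoc_def Fq_coeffs_def
  by (simp add: power_q_sum power_mult_distrib mem_Fq_iff mult.commute flip: power_mult)

lemma lin_assoc_mult:
  assumes "Fq_coeffs v"
  shows "L (u * v) x = L u (L v x)"
proof (induction u arbitrary: x rule: pCons_induct)
  case (pCons a u)
  have "pCons a u * v = smult a v + pCons 0 (u * v)"
    by simp
  then have "L (pCons a u * v) x = a * L v x + L (u * v) (x ^ q)"
    by (simp only: lin_assoc_add lin_assoc_smult lin_assoc_pCons) simp
  also have "L (u * v) (x ^ q) = L u (L v x ^ q)"
    by (simp only: pCons.IH lin_assoc_power_q[OF assms])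
  also have "a * L v x + L u (L v x ^ q) = L (pCons a u) (L v x)"
    by (simp only: lin_assoc_pCons)
  finally show ?case .
qed simp

lemma Fq_coeffs_X_power_minus_1: "Fq_coeffs (monom 1 n - 1)"
  by (intro Fq_coeffs_diff Fq_coeffs_monom Fq_coeffs_1) simp

lemma lin_assoc_X_power_minus_1: "L (monom 1 n - 1) x = 0"
  using lin_assoc_add[of "monom 1 n - 1" 1 x] by (simp add: lin_assoc_monom_1 power_q_power_n)

definition trace_poly :: "'a poly" where
  "trace_poly = (\<Sum>i<n. monom 1 i)"

lemma lin_assoc_trace_poly: "L trace_poly x = Tr x"
  by (simp add: trace_poly_def lin_assoc_sum lin_assoc_monom_1 trace_q_def)

lemma Fq_coeffs_trace_poly: "Fq_coeffs trace_poly"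
  by (simp add: Fq_coeffs_def trace_poly_def coeff_sum)

lemma trace_poly_mult_X_minus_1: "trace_poly * [:-1, 1:] = monom 1 n - 1"
proof -
  have X_minus_1: "[:-1, 1:] = ([:0, 1:] :: 'a poly) - 1"
    by (simp add: one_pCons)
  have X_power: "monom 1 i = ([:0, 1:] :: 'a poly) ^ i" for i
    by (simp add: monom_altdef)
  show ?thesis
    unfolding trace_poly_def X_minus_1 X_power by (subst power_diff_1_eq) (rule mult.commute)
qed

lemma trace_poly_eq_div: "(monom 1 n - 1) div [:-1, 1:] = trace_poly"
  unfolding trace_poly_mult_X_minus_1[symmetric] by (rule nonzero_mult_div_cancel_right) simp

lemma degree_X_power_minus_1: "degree (monom (1 :: 'a) n - 1) = n"
  using degree_add_eq_left[of "- 1" "monom (1 :: 'a) n"] n_pos by (simp add: degree_monom_eq)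

lemma trace_poly_nonzero: "trace_poly \<noteq> 0"
proof
  assume "trace_poly = 0"
  then have "monom 1 n - 1 = (0 :: 'a poly)"
    by (simp flip: trace_poly_mult_X_minus_1)
  then show False
    using degree_X_power_minus_1 n_pos by simp
qed

lemma degree_trace_poly: "degree trace_poly < n"
proof -
  have "degree (trace_poly * [:-1, 1:]) = degree trace_poly + 1"
    using trace_poly_nonzero by (subst degree_mult_eq) auto
  then show ?thesis
    unfolding trace_poly_mult_X_minus_1 degree_X_power_minus_1 by simp
qed

(* L_u is the polynomial function sum u_i x^(q^i) of degree at most q^(deg u) < q^n, so it
   cannot vanish on the whole field. *)
lemma lin_assoc_nonzero:
  assumes "u \<noteq> 0" "degree u < n"
  obtains y where "L u y \<noteq> 0"
proof -
  define p where "p = (\<Sum>i\<le>degree u. monom (coeff u i) (q ^ i))"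
  have poly_p: "poly p y = L u y" for y
    by (simp add: p_def poly_sum poly_monom lin_assoc_def)
  have "coeff p (q ^ degree u) = lead_coeff u"
    unfolding p_def coeff_sum coeff_monom
    using power_inject_exp[OF q_gt_1] by simp
  then have "p \<noteq> 0"
    using assms(1) by auto
  have "degree p \<le> q ^ degree u"
    unfolding p_def using q_gt_1
    by (intro degree_sum_le) (auto intro!: order.trans[OF degree_monom_le] power_increasing)
  also have "\<dots> < card (UNIV :: 'a set)"
    using assms(2) q_gt_1 card_UNIV by (simp add: power_strict_increasing)
  finally have "card {y. poly p y = 0} < card (UNIV :: 'a set)"
    using card_poly_roots_bound[OF \<open>p \<noteq> 0\<close>] by linarith
  then have "{y. poly p y = 0} \<noteq> UNIV"
    by auto
  then obtain y where "poly p y \<noteq> 0"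
    by auto
  then show thesis
    using that poly_p by simp
qed

lemma range_Tr: "range Tr = Fq"
proof
  show "range Tr \<subseteq> Fq"
    using Tr_in_Fq by blast
  show "Fq \<subseteq> range Tr"
  proof
    fix c assume "c \<in> Fq"
    obtain y where "Tr y \<noteq> 0"
      using lin_assoc_nonzero[OF trace_poly_nonzero degree_trace_poly]
      by (auto simp: lin_assoc_trace_poly)
    have "c / Tr y \<in> Fq"
      by (simp add: Fq_divide \<open>c \<in> Fq\<close> Tr_in_Fq)
    then have "Tr (c / Tr y * y) = c"
      using \<open>Tr y \<noteq> 0\<close> by (simp only: Tr_mult_Fq) simp
    then show "c \<in> range Tr"
      by (metis rangeI)
  qed
qed

section \<open>The kernel condition and the permutation criterion\<close>

lemma lin_assoc_kernel_nontrivial: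
  assumes "Fq_coeffs d" "d dvd monom 1 n - 1" "degree d > 0"
  obtains z where "z \<noteq> 0" "L d z = 0"
proof -
  obtain w where w: "monom 1 n - 1 = d * w"
    using assms(2) by (elim dvdE)
  have "d \<noteq> 0" "w \<noteq> 0"
    using w degree_X_power_minus_1 n_pos by auto
  then have "degree d + degree w = n"
    using w degree_X_power_minus_1 by (metis degree_mult_eq)
  then have "degree w < n"
    using assms(3) by simp
  have "Fq_coeffs w"
    using Fq_coeffs_cofactor[OF assms(1) _ \<open>d \<noteq> 0\<close>] Fq_coeffs_X_power_minus_1 w by simp
  obtain y where "L w y \<noteq> 0"
    using lin_assoc_nonzero[OF \<open>w \<noteq> 0\<close> \<open>degree w < n\<close>] .
  moreover have "L d (L w y) = 0"
    using lin_assoc_X_power_minus_1 by (simp add: w lin_assoc_mult \<open>Fq_coeffs w\<close> flip: lin_assoc_mult)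
  ultimately show thesis
    by (rule that)
qed

lemma Tr_lin_assoc_kernel_trivial_iff:
  assumes "Fq_coeffs g"
  shows "(\<forall>x. Tr x = 0 \<and> L g x = 0 \<longrightarrow> x = 0) \<longleftrightarrow> coprime g trace_poly"
proof
  assume kernel: "\<forall>x. Tr x = 0 \<and> L g x = 0 \<longrightarrow> x = 0"
  show "coprime g trace_poly"
  proof (rule ccontr)
    assume "\<not> coprime g trace_poly"
    then obtain d where d: "Fq_coeffs d" "degree d > 0" "d dvd g" "d dvd trace_poly"
      using Fq_common_factor_if_not_coprime[OF assms Fq_coeffs_trace_poly trace_poly_nonzero] by blast
    have "d dvd monom 1 n - 1"
      using d(4) unfolding trace_poly_mult_X_minus_1[symmetric] by (rule dvd_mult2)
    then obtain z where "z \<noteq> 0" "L d z = 0"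
      using lin_assoc_kernel_nontrivial d(1,2) by blast
    obtain g' e where "g = g' * d" "trace_poly = e * d"
      using d(3,4) by (metis dvdE mult.commute)
    then have "L g z = 0" "Tr z = 0"
      using \<open>L d z = 0\<close> by (simp_all add: lin_assoc_mult d(1) flip: lin_assoc_trace_poly)
    then show False
      using kernel \<open>z \<noteq> 0\<close> by blast
  qed
next
  assume "coprime g trace_poly"
  then obtain a b where bezout: "a * g + b * trace_poly = 1"
    using poly_coprime_imp_bezout trace_poly_nonzero by blast
  show "\<forall>x. Tr x = 0 \<and> L g x = 0 \<longrightarrow> x = 0"
  proof (intro allI impI)
    fix x assume "Tr x = 0 \<and> L g x = 0"
    then have "L (a * g + b * trace_poly) x = 0"
      by (simp add: lin_assoc_add lin_assoc_mult assms Fq_coeffs_trace_poly lin_assoc_trace_poly)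
    then show "x = 0"
      by (simp add: bezout)
  qed
qed

lemma Tr_poly_Fq:
  assumes "c \<in> Fq"
  shows "Tr (poly f c) = poly (Tn q n f) c"
proof -
  have "Tr (poly f c) = (\<Sum>i\<le>degree f. Tr (coeff f i * c ^ i))"
    by (simp add: poly_altdef Tr_sum)
  also have "\<dots> = (\<Sum>i\<le>degree f. Tr (coeff f i) * c ^ i)"
    using assms by (simp add: Tr_mult_Fq_right Fq_power)
  also have "\<dots> = poly (Tn q n f) c"
    by (simp add: Tn_def poly_sum poly_monom)
  finally show ?thesis .
qed

lemma Tr_lin_assoc: "Fq_coeffs g \<Longrightarrow> Tr (L g x) = poly g 1 * Tr x"
  by (simp add: lin_assoc_def Tr_sum Tr_mult_Fq Tr_power_q_power Fq_coeffs_def poly_altdef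
      sum_distrib_right)

lemma bij_trace_plus_lin_assoc_iff:
  assumes "Fq_coeffs g"
  shows "bij (\<lambda>x. poly f (Tr x) + L g x) \<longleftrightarrow>
    coprime g trace_poly \<and> bij_betw (poly (Tn q n f + smult (poly g 1) [:0, 1:])) Fq Fq"
proof -
  define Q where "Q = poly (Tn q n f + smult (poly g 1) [:0, 1:])"
  have "Tr (poly f (Tr x) + L g x) = Q (Tr x)" for x
    using assms by (simp add: Q_def Tr_add Tr_poly_Fq Tr_in_Fq Tr_lin_assoc)
  from AGW_bij_iff[where T = Tr and M = "L g" and F = "poly f" and Q = Q and S = Fq,
      OF Tr_diff lin_assoc_diff_right range_Tr this]
  show ?thesis
    unfolding Q_def by (simp only: Tr_lin_assoc_kernel_trivial_iff[OF assms])
qed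

end

lemma Fqn_field_prime_power:
  assumes "\<exists>p k. prime p \<and> k > 0 \<and> q = p ^ k"
    and "n > 0" and "card (UNIV :: 'a::{finite,field} set) = q ^ n"
  shows "Fqn_field TYPE('a) q n"
proof
  obtain p k where pk: "prime p" "k > 0" "q = p ^ k"
    using assms(1) by blast
  show "q > 1"
    using one_less_power[OF prime_gt_1_nat[OF pk(1)] pk(2)] pk(3) by simp
  show "(x + y) ^ q = x ^ q + y ^ q" for x y :: 'a
    using power_prime_power_add[OF pk(1), of "k * n"] assms(3) pk(3) by (simp add: power_mult)
qed (use assms(2,3) in auto)

theorem corollary3p4:
  fixes q n :: nat and h f :: "'a::{finite,field} poly"
  assumes "\<exists>p k. prime p \<and> k > 0 \<and> q = p ^ k"
    and "n > 0"
    and "card (UNIV :: 'a set) = q ^ n"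
    and "\<forall>i. coeff h i \<in> subfield_q q"
  shows "complete_perm_on UNIV (\<lambda>x. poly f (trace_q q n x) + lin_assoc q h x)
     \<longleftrightarrow> (coprime (h * (h + 1)) ((monom 1 n - 1) div [:-1, 1:])
          \<and> complete_perm_on (subfield_q q) (poly (Tn q n f + smult (poly h 1) [:0, 1:])))"
proof -
  interpret Fqn_field "TYPE('a)" q n
    using assms(1-3) by (rule Fqn_field_prime_power)
  have Fq_h: "Fq_coeffs h"
    using assms(4) by (simp add: Fq_coeffs_def)
  have Fq_h1: "Fq_coeffs (h + 1)"
    using Fq_coeffs_add[OF Fq_h Fq_coeffs_1] .
  have P_plus_id: "(\<lambda>x. poly f (Tr x) + L h x + x) = (\<lambda>x. poly f (Tr x) + L (h + 1) x)"
    by (simp add: lin_assoc_add add.assoc)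
  have Q_h1: "poly (Tn q n f + smult (poly (h + 1) 1) [:0, 1:]) =
      (\<lambda>x. poly (Tn q n f + smult (poly h 1) [:0, 1:]) x + x)"
    by (simp add: fun_eq_iff distrib_left)
  show ?thesis
    unfolding complete_perm_on_def bij_def[symmetric] P_plus_id
      bij_trace_plus_lin_assoc_iff[OF Fq_h] bij_trace_plus_lin_assoc_iff[OF Fq_h1] Q_h1
      trace_poly_eq_div poly_coprime_mult_left_iff[OF trace_poly_nonzero]
    by blast
qed

end
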